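(* There exists an orthonormal basis $(U_k)_{k\ge1}$ of $L^2_{\mathbb R}((0,2),dx)$ such that for every $x\in(0,1)$, $$\sum_{k=1}^n(U_k^-(x))^2=o\Big(\sum_{k=1}^n(U_k^+(x))^2\Big)\quad\text{as }n\to\infty.$$
   Context: For a real function $u$, $u^{\pm}(x)=\max(0,\pm u(x))$. *)

theory Defs
  imports "HOL-Analysis.Analysis" "HOL-Library.Landau_Symbols"
begin

definition pospart :: "(real \<Rightarrow> real) \<Rightarrow> real \<Rightarrow> real" where
  "pospart u x = max 0 (u x)"

definition negpart :: "(real \<Rightarrow> real) \<Rightarrow> real \<Rightarrow> real" where
  "negpart u x = max 0 (- u x)"

abbreviation I02 :: "real measure" where
  "I02 \<equiv> lebesgue_on {0<..<2}"

definition L2_02 :: "(real \<Rightarrow> real) set" where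
  "L2_02 = {f. f \<in> borel_measurable I02 \<and> integrable I02 (\<lambda>x. (f x)\<^sup>2)}"

definition inner02 :: "(real \<Rightarrow> real) \<Rightarrow> (real \<Rightarrow> real) \<Rightarrow> real" where
  "inner02 f g = integral\<^sup>L I02 (\<lambda>x. f x * g x)"

definition ONB02 :: "(nat \<Rightarrow> real \<Rightarrow> real) \<Rightarrow> bool" where
  "ONB02 U \<longleftrightarrow>
     (\<forall>k\<ge>1. U k \<in> L2_02) \<and>
     (\<forall>i\<ge>1. \<forall>j\<ge>1. inner02 (U i) (U j) = (if i = j then 1 else 0)) \<and>
     (\<forall>f\<in>L2_02. (\<forall>k\<ge>1. inner02 f (U k) = 0) \<longrightarrow> (AE x in I02. f x = 0))"

end

(*
  The interval (0,2) is split into the half (0,1), where the sums are compared, and a reservoir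
  [1,2). The dyadic interval J of [0,1) of length 2^-n is glued to a tail D in [1,2) of length
  1/((n+1) 2^n), and the tails of the two halves of J fill an initial part D' of D. This gives a
  binary partition of (0,2) into the cells J \<union> D, J \<union> D' and the dyadic subintervals of the spare
  part D - D'; the Haar functions of this partition (constant on the two children of a cell, of
  mean zero and norm one) together with a constant form an orthonormal basis.

  Since the negative value of the Haar function of J \<union> D lives on D - D', which lies in [1,2), on
  (0,1) it only takes its positive value, whose square is of order 2^n / n^2. Negative values on
  (0,1) come only from the cells J \<union> D', and their squares are at most 2^(n+1). The enumeration
  postpones the cell J \<union> D' at depth 2n+1 until the cells J \<union> D of depth up to about 16n have been
  listed, so the negative contributions are exponentially smaller than a single positive one.

  Completeness: a function orthogonal to the basis has integral zero over every cell. The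
  integral over J is then minus the integral over the tails of the descendants of J at depth k,
  a set of measure 1/((n+k+1) 2^n); hence it vanishes, and so does the integral over (0,t) for a
  dense set of t, hence for all t.
*)

theory Submission
  imports Defs "HOL-Library.Sublist" "HOL-Real_Asymp.Real_Asymp"
begin

section \<open>Haar functions of a binary partition\<close>

lemma set_integrable_if_integrable:
  fixes f :: "'a \<Rightarrow> 'b::{banach, second_countable_topology}"
  shows "A \<in> sets M \<Longrightarrow> integrable M f \<Longrightarrow> set_integrable M A f"
  unfolding set_integrable_def by (rule integrable_mult_indicator)

definition haar_height :: "'a measure \<Rightarrow> 'a set \<Rightarrow> 'a set \<Rightarrow> real" where
  "haar_height M A B = sqrt (measure M B / (measure M A * (measure M A + measure M B)))"

definition haar_step :: "'a measure \<Rightarrow> 'a set \<Rightarrow> 'a set \<Rightarrow> 'a \<Rightarrow> real" where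
  "haar_step M A B x = haar_height M A B * indicator A x - haar_height M B A * indicator B x"

lemma haar_height_nonneg: "0 \<le> haar_height M A B"
  by (simp add: haar_height_def)

lemma haar_height_sq:
  "(haar_height M A B)\<^sup>2 = measure M B / (measure M A * (measure M A + measure M B))"
  by (simp add: haar_height_def)

lemma haar_height_sq_le:
  assumes "0 < measure M A"
  shows "(haar_height M A B)\<^sup>2 \<le> 1 / measure M A"
proof -
  have "(haar_height M A B)\<^sup>2 = measure M B / (measure M A + measure M B) * (1 / measure M A)"
    by (simp add: haar_height_sq)
  also have "\<dots> \<le> 1 * (1 / measure M A)"
    using assms measure_nonneg[of M B]
    by (intro mult_right_mono) (simp_all add: divide_le_eq_1 add_pos_nonneg)
  finally show ?thesis by simp
qed

lemma haar_height_balance: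
  assumes "0 < measure M A" "0 < measure M B"
  shows "haar_height M A B * measure M A = haar_height M B A * measure M B"
proof -
  define a b where "a = measure M A" and "b = measure M B"
  have "a > 0" "b > 0" using assms by (simp_all add: a_def b_def)
  then have "a + b > 0" by simp
  have "(haar_height M A B * a)\<^sup>2 = a * b / (a + b)"
    unfolding power_mult_distrib haar_height_sq a_def[symmetric] b_def[symmetric]
    using \<open>a > 0\<close> \<open>a + b > 0\<close> by (simp add: power2_eq_square)
  also have "\<dots> = (haar_height M B A * b)\<^sup>2"
    unfolding power_mult_distrib haar_height_sq a_def[symmetric] b_def[symmetric]
    using \<open>b > 0\<close> \<open>a + b > 0\<close> by (simp add: power2_eq_square add.commute)
  moreover have "0 \<le> haar_height M A B * a" "0 \<le> haar_height M B A * b"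
    using \<open>a > 0\<close> \<open>b > 0\<close> by (auto intro!: mult_nonneg_nonneg haar_height_nonneg)
  ultimately show ?thesis
    unfolding a_def b_def by (simp add: power2_eq_iff_nonneg)
qed

lemma haar_step_outside: "x \<notin> A \<Longrightarrow> x \<notin> B \<Longrightarrow> haar_step M A B x = 0"
  by (simp add: haar_step_def)

lemma haar_step_left: "A \<inter> B = {} \<Longrightarrow> x \<in> A \<Longrightarrow> haar_step M A B x = haar_height M A B"
  by (auto simp: haar_step_def indicator_def)

lemma haar_step_right: "A \<inter> B = {} \<Longrightarrow> x \<in> B \<Longrightarrow> haar_step M A B x = - haar_height M B A"
  by (auto simp: haar_step_def indicator_def)

lemma borel_measurable_haar_step [measurable]:
  assumes [measurable]: "A \<in> sets M" "B \<in> sets M"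
  shows "haar_step M A B \<in> borel_measurable M"
  unfolding haar_step_def[abs_def] by measurable

context finite_measure
begin

lemma integrable_indicator_real: "A \<in> sets M \<Longrightarrow> integrable M (indicator A :: 'a \<Rightarrow> real)"
  by (simp add: integrable_real_indicator less_top[symmetric])

lemma integral_haar_step:
  assumes "A \<in> sets M" "B \<in> sets M" "0 < measure M A" "0 < measure M B"
  shows "integral\<^sup>L M (haar_step M A B) = 0"
  using assms haar_height_balance[of M A B]
  by (simp add: haar_step_def[abs_def] integrable_indicator_real)

lemma integral_haar_step_sq:
  assumes "A \<in> sets M" "B \<in> sets M" "A \<inter> B = {}" "0 < measure M A" "0 < measure M B"
  shows "integral\<^sup>L M (\<lambda>x. (haar_step M A B x)\<^sup>2) = 1"
proof -
  define a b where "a = measure M A" and "b = measure M B"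
  have "a > 0" "b > 0" using assms by (simp_all add: a_def b_def)
  have "(haar_step M A B x)\<^sup>2 =
      (haar_height M A B)\<^sup>2 * indicator A x + (haar_height M B A)\<^sup>2 * indicator B x" for x
    using assms(3) by (auto simp: haar_step_def indicator_def)
  then have "integral\<^sup>L M (\<lambda>x. (haar_step M A B x)\<^sup>2) = (haar_height M A B)\<^sup>2 * a + (haar_height M B A)\<^sup>2 * b"
    using assms(1,2) by (simp add: integrable_indicator_real a_def b_def)
  also have "\<dots> = b / (a + b) + a / (a + b)"
    using \<open>a > 0\<close> \<open>b > 0\<close> by (simp add: haar_height_sq a_def[symmetric] b_def[symmetric] add.commute)
  also have "\<dots> = 1"
    using \<open>a > 0\<close> \<open>b > 0\<close> by (simp add: add_divide_distrib[symmetric])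
  finally show ?thesis .
qed

lemma integral_mult_haar_step:
  fixes f :: "'a \<Rightarrow> real"
  assumes "integrable M f" "A \<in> sets M" "B \<in> sets M"
  shows "integral\<^sup>L M (\<lambda>x. f x * haar_step M A B x)
       = haar_height M A B * (LINT x:A|M. f x) - haar_height M B A * (LINT x:B|M. f x)"
proof -
  have "(\<lambda>x. f x * haar_step M A B x)
      = (\<lambda>x. haar_height M A B * (indicator A x * f x) - haar_height M B A * (indicator B x * f x))"
    by (auto simp: haar_step_def algebra_simps)
  then show ?thesis
    using assms by (simp add: set_lebesgue_integral_def integrable_real_mult_indicator mult.commute)
qed

end

locale binary_partition_tree = finite_measure M
  for M :: "'a measure" and cell :: "bool list \<Rightarrow> 'a set" +
  assumes sets_cell [measurable]: "cell p \<in> sets M"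
    and cell_Nil: "cell [] = space M"
    and cell_split: "cell (p @ [True]) \<union> cell (p @ [False]) = cell p"
    and cell_split_disjoint: "cell (p @ [True]) \<inter> cell (p @ [False]) = {}"
    and measure_cell_pos: "0 < measure M (cell p)"
begin

definition haar :: "bool list \<Rightarrow> 'a \<Rightarrow> real" where
  "haar p = haar_step M (cell (p @ [True])) (cell (p @ [False]))"

lemma cell_child_subset: "cell (p @ [c]) \<subseteq> cell p"
  using cell_split[of p] by (cases c) auto

lemma cell_prefix_subset: "prefix p q \<Longrightarrow> cell q \<subseteq> cell p"
proof (induction q rule: rev_induct)
  case (snoc c q)
  then show ?case
    using cell_child_subset[of q c] by (cases "p = q @ [c]") (auto simp: prefix_snoc)
qed simp

lemma cell_parallel_disjoint:
  assumes "p \<parallel> q"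
  shows "cell p \<inter> cell q = {}"
proof -
  obtain r b bs c cs where "b \<noteq> c" and p: "p = r @ b # bs" and q: "q = r @ c # cs"
    using parallel_decomp[OF assms] by blast
  then have "cell (r @ [b]) \<inter> cell (r @ [c]) = {}"
    using cell_split_disjoint[of r] by (cases b) auto
  moreover have "cell p \<subseteq> cell (r @ [b])" "cell q \<subseteq> cell (r @ [c])"
    unfolding p q by (intro cell_prefix_subset; simp)+
  ultimately show ?thesis by blast
qed

lemma borel_measurable_haar [measurable]: "haar p \<in> borel_measurable M"
  by (simp add: haar_def)

lemma haar_outside: "x \<notin> cell p \<Longrightarrow> haar p x = 0"
  using cell_split[of p] unfolding haar_def by (intro haar_step_outside) auto

lemma haar_on_child:
  "x \<in> cell (p @ [c]) \<Longrightarrow>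
     haar p x = (if c then haar_height M (cell (p @ [True])) (cell (p @ [False]))
                 else - haar_height M (cell (p @ [False])) (cell (p @ [True])))"
  using cell_split_disjoint[of p]
  by (cases c) (simp_all add: haar_def haar_step_left haar_step_right)

lemma haar_sq_le: "(haar p x)\<^sup>2 \<le> max (1 / measure M (cell (p @ [True]))) (1 / measure M (cell (p @ [False])))"
proof -
  consider "x \<in> cell (p @ [True])" | "x \<in> cell (p @ [False])" | "x \<notin> cell p"
    using cell_split[of p] by blast
  then show ?thesis
    by cases (simp_all add: haar_on_child haar_outside measure_cell_pos haar_height_sq_le le_max_iff_disj)
qed

lemma integrable_haar_sq: "integrable M (\<lambda>x. (haar p x)\<^sup>2)"
  by (rule integrable_const_bound[where B = "max (1 / measure M (cell (p @ [True]))) (1 / measure M (cell (p @ [False])))"])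
    (use haar_sq_le in auto)

lemma integral_haar: "integral\<^sup>L M (haar p) = 0"
  by (simp add: haar_def integral_haar_step measure_cell_pos)

lemma integral_haar_mult_haar: "integral\<^sup>L M (\<lambda>x. haar p x * haar q x) = (if p = q then 1 else 0)"
proof -
  have nested: "integral\<^sup>L M (\<lambda>x. haar p x * haar q x) = 0" if "strict_prefix p q" for p q
  proof -
    obtain c r where q: "q = (p @ [c]) @ r"
      using \<open>strict_prefix p q\<close> by (auto elim: strict_prefixE')
    then have sub: "cell q \<subseteq> cell (p @ [c])" by (intro cell_prefix_subset) simp
    define k where "k = haar p (SOME x. x \<in> cell q)"
    have eq: "haar p x * haar q x = k * haar q x" for x
    proof (cases "x \<in> cell q")
      case True
      then have "cell q \<noteq> {}" by blast
      then have "(SOME x. x \<in> cell q) \<in> cell q" by (simp add: some_in_eq)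
      then show ?thesis using True sub by (simp add: k_def haar_on_child[of _ p c] subsetD)
    qed (simp add: haar_outside)
    show ?thesis unfolding eq by (simp add: integral_haar)
  qed
  consider "p = q" | "strict_prefix p q" | "strict_prefix q p" | "p \<parallel> q"
    by (cases p q rule: prefix_cases) (auto simp: strict_prefix_def)
  then show ?thesis
  proof cases
    case 1
    then show ?thesis
      using integral_haar_step_sq[of "cell (q @ [True])" "cell (q @ [False])"]
      by (simp add: haar_def power2_eq_square cell_split_disjoint measure_cell_pos)
  next
    case 2
    then show ?thesis using nested by auto
  next
    case 3
    then show ?thesis using nested[of q p] by (auto simp: mult.commute)
  next
    case 4
    then have zero: "haar p x * haar q x = 0" for x
      using cell_parallel_disjoint[OF 4] haar_outside[of x p] haar_outside[of x q]
      by (cases "x \<in> cell p") auto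
    from 4 have "p \<noteq> q" by auto
    then show ?thesis unfolding zero by simp
  qed
qed

lemma set_integral_cell_eq_0:
  fixes f :: "'a \<Rightarrow> real"
  assumes f: "integrable M f" and mean: "integral\<^sup>L M f = 0"
    and orth: "\<And>p. integral\<^sup>L M (\<lambda>x. f x * haar p x) = 0"
  shows "(LINT x:cell p|M. f x) = 0"
proof (induction p rule: rev_induct)
  case Nil
  show ?case using f mean by (simp add: cell_Nil set_integral_space)
next
  case (snoc c p)
  define A B where "A = cell (p @ [True])" and "B = cell (p @ [False])"
  have int: "set_integrable M C f" if "C \<in> sets M" for C
    using that f by (rule set_integrable_if_integrable)
  have sum: "(LINT x:A|M. f x) + (LINT x:B|M. f x) = 0"
    using snoc.IH set_integral_Un[OF cell_split_disjoint int int, of p]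
    by (simp add: A_def B_def cell_split)
  then have B: "(LINT x:B|M. f x) = - (LINT x:A|M. f x)" by linarith
  have "haar_height M A B * (LINT x:A|M. f x) - haar_height M B A * (LINT x:B|M. f x) = 0"
    using orth[of p] integral_mult_haar_step[OF f] by (simp add: haar_def A_def B_def)
  then have "(haar_height M A B + haar_height M B A) * (LINT x:A|M. f x) = 0"
    unfolding B by (simp add: algebra_simps)
  moreover have "0 < haar_height M A B"
    using measure_cell_pos by (simp add: haar_height_def A_def B_def add_pos_pos)
  ultimately have "(LINT x:A|M. f x) = 0"
    using haar_height_nonneg[of M B A] by simp
  with sum show ?case by (cases c) (simp_all add: A_def B_def)
qed

end

lemma emeasure_density_eq_set_integral:
  fixes h :: "'a \<Rightarrow> real"
  assumes [measurable]: "integrable M h" "A \<in> sets M" and "\<And>x. 0 \<le> h x"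
  shows "emeasure (density M (\<lambda>x. ennreal (h x))) A = ennreal (LINT x:A|M. h x)"
  using assms by (simp add: emeasure_density nn_set_integral_eq_set_integral[symmetric] mult.commute)

lemma AE_eq_0_if_set_integrals_greaterThan_lborel:
  fixes g :: "real \<Rightarrow> real"
  assumes g: "integrable lborel g" and zero: "\<And>t. (LINT x:{t<..}|lborel. g x) = 0"
  shows "AE x in lborel. g x = 0"
proof -
  have [measurable]: "g \<in> borel_measurable lborel" using g by auto
  have int: "integrable lborel (pospart g)" "integrable lborel (negpart g)"
    using g by (auto simp: pospart_def[abs_def] negpart_def[abs_def] intro!: integrable_max)
  have set_int: "set_integrable lborel {t<..} (pospart g)" "set_integrable lborel {t<..} (negpart g)" for t
    using int by (simp_all add: set_integrable_if_integrable)
  have "(LINT x:{t<..}|lborel. pospart g x) = (LINT x:{t<..}|lborel. negpart g x)" for t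
  proof -
    have "pospart g x - negpart g x = g x" for x by (simp add: pospart_def negpart_def)
    then have "(LINT x:{t<..}|lborel. pospart g x - negpart g x) = 0" using zero[of t] by simp
    then show ?thesis using set_int[of t] by simp
  qed
  moreover have nonneg: "0 \<le> pospart g x" "0 \<le> negpart g x" for x
    by (simp_all add: pospart_def negpart_def)
  ultimately have dens: "emeasure (density lborel (\<lambda>x. ennreal (pospart g x))) {t<..}
      = emeasure (density lborel (\<lambda>x. ennreal (negpart g x))) {t<..}" for t
    using emeasure_density_eq_set_integral[OF int(1) _ nonneg(1)]
      emeasure_density_eq_set_integral[OF int(2) _ nonneg(2)] by simp
  have "density lborel (\<lambda>x. ennreal (pospart g x)) = density lborel (\<lambda>x. ennreal (negpart g x))"
  proof (rule measure_eqI_lessThan)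
    fix t
    show "emeasure (density lborel (\<lambda>x. ennreal (pospart g x))) {t<..} < \<infinity>"
      using emeasure_density_eq_set_integral[OF int(1) _ nonneg(1), of "{t<..}"] by simp
  qed (simp_all add: dens)
  then have "AE x in lborel. ennreal (pospart g x) = ennreal (negpart g x)"
    by (intro sigma_finite_measure.density_unique[OF sigma_finite_lborel]) (auto simp: pospart_def negpart_def)
  then show ?thesis
    by eventually_elim (auto simp: pospart_def negpart_def max_def split: if_splits)
qed

lemma AE_eq_0_if_set_integrals_greaterThan:
  fixes f :: "real \<Rightarrow> real"
  assumes S: "S \<in> sets lebesgue" and f: "integrable (lebesgue_on S) f"
    and zero: "\<And>t. (LINT x:{t<..}|lebesgue_on S. f x) = 0"
  shows "AE x in lebesgue_on S. f x = 0"
proof -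
  have S': "S \<inter> space lebesgue \<in> sets lebesgue" using S by simp
  \<comment> \<open>The zero extension of \<open>f\<close> is only Lebesgue measurable; uniqueness of densities
    is applied to a Borel representative \<open>g\<close> of it.\<close>
  define F where "F x = indicator S x * f x" for x
  have intF: "integrable lebesgue F"
    using f unfolding F_def integrable_restrict_space[OF S'] by simp
  then have "F \<in> borel_measurable (completion lborel)" by auto
  then obtain g where [measurable]: "g \<in> borel_measurable lborel" and Fg: "AE x in lborel. F x = g x"
    using completion_ex_borel_measurable_real by blast
  have FgL: "AE x in lebesgue. F x = g x" using Fg by (rule AE_completion)
  have g_lebesgue [measurable]: "g \<in> borel_measurable lebesgue" by (rule measurable_completion) simp
  have "integrable lebesgue g"
    by (rule integrable_cong_AE_imp[OF intF g_lebesgue FgL])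
  then have g: "integrable lborel g"
    using integrable_completion[of g lborel] by simp
  have "(LINT x:{t<..}|lborel. g x) = 0" for t
  proof -
    have "(LINT x:{t<..}|lborel. g x) = (LINT x:{t<..}|lebesgue. g x)"
      by (simp add: set_lebesgue_integral_def integral_completion)
    also have "\<dots> = (LINT x:{t<..}|lebesgue. F x)"
      using FgL by (intro set_lebesgue_integral_cong_AE) (auto intro: borel_measurable_integrable[OF intF])
    also have "\<dots> = (LINT x:{t<..}|lebesgue_on S. f x)"
      unfolding set_lebesgue_integral_def F_def integral_restrict_space[OF S']
      by (simp add: mult.commute mult.left_commute)
    finally show ?thesis using zero by simp
  qed
  then have "AE x in lborel. g x = 0" by (rule AE_eq_0_if_set_integrals_greaterThan_lborel[OF g])
  then have "AE x in lborel. F x = 0"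
    using Fg by eventually_elim simp
  then have "AE x in lebesgue. F x = 0" by (rule AE_completion)
  then show ?thesis
    by (subst AE_restrict_space_iff) (auto simp: S F_def elim!: eventually_mono)
qed

lemma (in finite_measure) set_integral_small_measure:
  fixes f :: "'a \<Rightarrow> real"
  assumes [measurable]: "f \<in> borel_measurable M" and sq: "integrable M (\<lambda>x. (f x)\<^sup>2)" and "0 < e"
  obtains d where "0 < d" "\<And>E. E \<in> sets M \<Longrightarrow> measure M E < d \<Longrightarrow> \<bar>LINT x:E|M. f x\<bar> \<le> e"
proof
  define Q where "Q = integral\<^sup>L M (\<lambda>x. (f x)\<^sup>2)"
  have "0 \<le> Q" unfolding Q_def by (rule integral_nonneg_AE) auto
  define t where "t = e / (Q + 1)"
  have t: "0 < t" using \<open>0 < e\<close> \<open>0 \<le> Q\<close> by (simp add: t_def)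
  show "0 < e * t" using \<open>0 < e\<close> t by simp
  fix E assume E: "E \<in> sets M" "measure M E < e * t"
  have int: "set_integrable M E f" "set_integrable M E (\<lambda>x. (f x)\<^sup>2)"
    using square_integrable_imp_integrable[OF _ sq] sq E(1) by (simp_all add: set_integrable_if_integrable)
  have ind: "set_integrable M E (\<lambda>x. 1 :: real)"
    using E(1) by (simp add: set_integrable_def integrable_indicator_real)
  have pt: "\<bar>f x\<bar> \<le> t / 2 * (f x)\<^sup>2 + 1 / (2 * t)" for x
  proof -
    have "0 \<le> (t * \<bar>f x\<bar> - 1)\<^sup>2" by simp
    then have "2 * t * \<bar>f x\<bar> \<le> t\<^sup>2 * (f x)\<^sup>2 + 1"
      by (simp add: power2_eq_square algebra_simps)
    then show ?thesis using t by (simp add: field_simps power2_eq_square)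
  qed
  have "\<bar>LINT x:E|M. f x\<bar> \<le> (LINT x:E|M. \<bar>f x\<bar>)"
    using set_integral_norm_bound[OF int(1)] by simp
  also have "\<dots> \<le> (LINT x:E|M. t / 2 * (f x)\<^sup>2 + 1 / (2 * t))"
    using int ind pt by (intro set_integral_mono) (auto intro: set_integrable_abs)
  also have "\<dots> = t / 2 * (LINT x:E|M. (f x)\<^sup>2) + measure M E / (2 * t)"
    using int(2) ind E(1) by (simp add: set_integral_const)
  also have "\<dots> \<le> e / 2 + e / 2"
  proof (rule add_mono)
    have "(LINT x:E|M. (f x)\<^sup>2) \<le> Q"
      unfolding Q_def set_lebesgue_integral_def
      using sq int(2) by (intro integral_mono) (auto simp: set_integrable_def indicator_def)
    then have "t / 2 * (LINT x:E|M. (f x)\<^sup>2) \<le> t / 2 * Q"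
      using t by (intro mult_left_mono) auto
    also have "\<dots> \<le> e / 2"
      using \<open>0 < e\<close> \<open>0 \<le> Q\<close> by (simp add: t_def field_simps)
    finally show "t / 2 * (LINT x:E|M. (f x)\<^sup>2) \<le> e / 2" .
    show "measure M E / (2 * t) \<le> e / 2"
      using E(2) t by (simp add: field_simps)
  qed
  finally show "\<bar>LINT x:E|M. f x\<bar> \<le> e" by simp
qed

section \<open>Enumerations with nondecreasing rank\<close>

lemma incseq_enumeration_ex:
  fixes r :: "'a::countable \<Rightarrow> nat"
  assumes inf: "infinite (UNIV :: 'a set)" and fin: "\<And>n. finite {x. r x \<le> n}"
  shows "\<exists>e. bij e \<and> incseq (\<lambda>k. r (e k))"
proof -
  define M where "M t = Max (to_nat ` {x. r x \<le> t})" for t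
  define key where "key x = (\<Sum>i<r x. M i + 1) + to_nat x" for x
  have key_less: "key x < key y" if "r x < r y" for x y
  proof -
    have "to_nat x \<le> M (r x)" unfolding M_def using fin by (intro Max_ge) auto
    then have "key x < (\<Sum>i<Suc (r x). M i + 1)" by (simp add: key_def)
    also have "\<dots> \<le> (\<Sum>i<r y. M i + 1)" using that by (intro sum_mono2) auto
    also have "\<dots> \<le> key y" by (simp add: key_def)
    finally show ?thesis .
  qed
  have "inj key"
  proof (rule injI)
    fix x y assume "key x = key y"
    with key_less[of x y] key_less[of y x] have "r x = r y" by fastforce
    with \<open>key x = key y\<close> show "x = y" by (simp add: key_def)
  qed
  then have inf_key: "infinite (range key)" using inf finite_imageD by blast
  define e where "e k = inv key (enumerate (range key) k)" for k
  have key_e: "key (e k) = enumerate (range key) k" for k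
    unfolding e_def using enumerate_in_set[OF inf_key] by (simp add: f_inv_into_f)
  have "inj e"
    by (rule injI) (metis key_e inj_enumerate[OF inf_key] injD)
  moreover have "surj e"
  proof -
    have "x \<in> range e" for x
    proof -
      obtain k where "enumerate (range key) k = key x"
        using enumerate_Ex[OF inf_key, of "key x"] by auto
      then show ?thesis using key_e \<open>inj key\<close> by (metis injD rangeI)
    qed
    then show ?thesis by blast
  qed
  moreover have "incseq (\<lambda>k. r (e k))"
  proof (rule incseq_SucI, rule ccontr)
    fix k :: nat assume "\<not> r (e k) \<le> r (e (Suc k))"
    then have "enumerate (range key) (Suc k) < enumerate (range key) k"
      using key_less[of "e (Suc k)" "e k"] by (simp add: key_e)
    then show False using enumerate_mono_iff[OF inf_key, of "Suc k" k] by simp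
  qed
  ultimately show ?thesis by (auto simp: bij_def)
qed

lemma filterlim_enumeration_at_top:
  fixes r :: "'a \<Rightarrow> nat" and e :: "nat \<Rightarrow> 'a"
  assumes inf: "infinite (UNIV :: 'a set)" and fin: "\<And>n. finite {x. r x \<le> n}"
    and e: "surj e" "incseq (\<lambda>k. r (e k))"
  shows "filterlim (\<lambda>k. r (e k)) at_top sequentially"
  unfolding filterlim_at_top eventually_sequentially
proof
  fix S
  obtain x where "S \<le> r x"
    using inf fin[of S] by (metis (mono_tags, lifting) UNIV_eq_I mem_Collect_eq nle_le)
  moreover obtain k0 where "e k0 = x" using e(1) by (metis surjD)
  ultimately have "\<forall>k\<ge>k0. S \<le> r (e k)"
    using incseqD[OF e(2)] le_trans by blast
  then show "\<exists>k0. \<forall>k\<ge>k0. S \<le> r (e k)" by blast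
qed

section \<open>The partition of (0,2)\<close>

definition tail_len :: "nat \<Rightarrow> real" where
  "tail_len n = 1 / (real (n + 1) * 2 ^ n)"

fun tail_start :: "nat \<Rightarrow> nat \<Rightarrow> real" where
  "tail_start 0 j = 1"
| "tail_start (Suc n) j = tail_start n (j div 2) + (if odd j then tail_len (Suc n) else 0)"

definition dyadic_ivl :: "nat \<Rightarrow> nat \<Rightarrow> real set" where
  "dyadic_ivl n j = {real j / 2 ^ n ..< (real j + 1) / 2 ^ n}"

definition tail_ivl :: "nat \<Rightarrow> nat \<Rightarrow> real set" where
  "tail_ivl n j = {tail_start n j ..< tail_start n j + tail_len n}"

definition head_ivl :: "nat \<Rightarrow> nat \<Rightarrow> real set" where
  "head_ivl n j = {tail_start n j ..< tail_start n j + 2 * tail_len (Suc n)}"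

definition spare_start :: "nat \<Rightarrow> nat \<Rightarrow> real" where
  "spare_start n j = tail_start n j + 2 * tail_len (Suc n)"

definition spare_len :: "nat \<Rightarrow> real" where
  "spare_len n = tail_len n - 2 * tail_len (Suc n)"

abbreviation spare_ivl :: "nat \<Rightarrow> nat \<Rightarrow> real set" where
  "spare_ivl n j \<equiv> {spare_start n j ..< spare_start n j + spare_len n}"

lemma sets_lebesgue_ivl [measurable]:
  "dyadic_ivl n j \<in> sets lebesgue" "tail_ivl n j \<in> sets lebesgue" "head_ivl n j \<in> sets lebesgue"
  by (simp_all add: dyadic_ivl_def tail_ivl_def head_ivl_def)

lemma tail_len_pos: "0 < tail_len n"
  by (simp add: tail_len_def)

lemma tail_len_le: "tail_len n \<le> 1 / 2 ^ n"
proof -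
  have "(1::real) * 2 ^ n \<le> real (n + 1) * 2 ^ n" by (intro mult_right_mono) auto
  then show ?thesis unfolding tail_len_def by (intro divide_left_mono) auto
qed

lemma two_tail_len_Suc: "2 * tail_len (Suc n) = 1 / (real (n + 2) * 2 ^ n)"
  unfolding tail_len_def by (simp add: divide_simps)

lemma spare_len_eq: "spare_len n = 1 / ((real n + 1) * (real n + 2) * 2 ^ n)"
proof -
  have "spare_len n = 1 / (real (n + 1) * 2 ^ n) - 1 / (real (n + 2) * 2 ^ n)"
    unfolding spare_len_def two_tail_len_Suc by (simp add: tail_len_def)
  also have "\<dots> = 1 / ((real n + 1) * (real n + 2) * 2 ^ n)"
    by (simp add: divide_simps) (simp add: algebra_simps)
  finally show ?thesis .
qed

lemma spare_len_pos: "0 < spare_len n"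
  by (simp add: spare_len_eq)

lemma tail_start_bounds: "j < 2 ^ n \<Longrightarrow> 1 \<le> tail_start n j \<and> tail_start n j + tail_len n \<le> 2"
proof (induction n arbitrary: j)
  case 0
  then show ?case by (simp add: tail_len_def)
next
  case (Suc n)
  then have "1 \<le> tail_start n (j div 2)" "tail_start n (j div 2) + tail_len n \<le> 2"
    by (simp_all add: less_mult_imp_div_less)
  moreover have "2 * tail_len (Suc n) \<le> tail_len n"
    using spare_len_pos[of n] by (simp add: spare_len_def)
  ultimately show ?case using tail_len_pos[of "Suc n"] by auto
qed

lemma dyadic_end_le_1: "j < 2 ^ n \<Longrightarrow> (real j + 1) / 2 ^ n \<le> 1"
proof -
  assume "j < 2 ^ n"
  then have "real j + 1 \<le> 2 ^ n"
    by (metis Suc_leI add.commute of_nat_Suc of_nat_le_iff of_nat_numeral of_nat_power)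
  then show ?thesis by simp
qed

lemma dyadic_ivl_subset: "j < 2 ^ n \<Longrightarrow> dyadic_ivl n j \<subseteq> {0..<1}"
  using dyadic_end_le_1[of j n] by (auto simp: dyadic_ivl_def)

lemma tail_ivl_subset: "j < 2 ^ n \<Longrightarrow> tail_ivl n j \<subseteq> {1..<2}"
  using tail_start_bounds[of j n] by (auto simp: tail_ivl_def)

lemma dyadic_tail_disjoint: "j < 2 ^ n \<Longrightarrow> i < 2 ^ m \<Longrightarrow> dyadic_ivl n j \<inter> tail_ivl m i = {}"
proof -
  assume "j < 2 ^ n" "i < 2 ^ m"
  moreover have "{0..<1} \<inter> {1..<2::real} = {}" by auto
  ultimately show ?thesis using dyadic_ivl_subset[of j n] tail_ivl_subset[of i m] by blast
qed

lemma head_spare_split: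
  "head_ivl n j \<union> spare_ivl n j = tail_ivl n j"
  "head_ivl n j \<inter> spare_ivl n j = {}"
  using spare_len_pos[of n] tail_len_pos[of "Suc n"]
  by (auto simp: head_ivl_def tail_ivl_def spare_start_def spare_len_def)

lemma tail_ivl_children:
  "tail_ivl (Suc n) (2 * j) \<union> tail_ivl (Suc n) (2 * j + 1) = head_ivl n j"
  "tail_ivl (Suc n) (2 * j) \<inter> tail_ivl (Suc n) (2 * j + 1) = {}"
  using tail_len_pos[of "Suc n"] by (auto simp: tail_ivl_def head_ivl_def)

lemma dyadic_ivl_children:
  "dyadic_ivl (Suc n) (2 * j) \<union> dyadic_ivl (Suc n) (2 * j + 1) = dyadic_ivl n j"
  "dyadic_ivl (Suc n) (2 * j) \<inter> dyadic_ivl (Suc n) (2 * j + 1) = {}"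
proof -
  have "dyadic_ivl (Suc n) (2 * j) = {real j / 2 ^ n ..< (real j + 1 / 2) / 2 ^ n}"
    "dyadic_ivl (Suc n) (2 * j + 1) = {(real j + 1 / 2) / 2 ^ n ..< (real j + 1) / 2 ^ n}"
    unfolding dyadic_ivl_def by (rule arg_cong2[where f = atLeastLessThan]; simp add: field_simps)+
  moreover have "real j / 2 ^ n \<le> (real j + 1 / 2) / 2 ^ n" "(real j + 1 / 2) / 2 ^ n \<le> (real j + 1) / 2 ^ n"
    by (simp_all add: divide_right_mono)
  ultimately show
    "dyadic_ivl (Suc n) (2 * j) \<union> dyadic_ivl (Suc n) (2 * j + 1) = dyadic_ivl n j"
    "dyadic_ivl (Suc n) (2 * j) \<inter> dyadic_ivl (Suc n) (2 * j + 1) = {}"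
    by (auto simp: dyadic_ivl_def)
qed

datatype node = Full nat nat | Head nat nat | Seg real real

abbreviation spare_seg :: "nat \<Rightarrow> nat \<Rightarrow> node" where
  "spare_seg n j \<equiv> Seg (spare_start n j) (spare_start n j + spare_len n)"

fun node_set :: "node \<Rightarrow> real set" where
  "node_set (Full n j) = dyadic_ivl n j \<union> tail_ivl n j"
| "node_set (Head n j) = dyadic_ivl n j \<union> head_ivl n j"
| "node_set (Seg a b) = {a..<b}"

fun child :: "node \<Rightarrow> bool \<Rightarrow> node" where
  "child (Full n j) c = (if c then Head n j else spare_seg n j)"
| "child (Head n j) c = (if c then Full (Suc n) (2 * j) else Full (Suc n) (2 * j + 1))"
| "child (Seg a b) c = (if c then Seg a ((a + b) / 2) else Seg ((a + b) / 2) b)"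

fun valid_node :: "node \<Rightarrow> bool" where
  "valid_node (Full n j) \<longleftrightarrow> j < 2 ^ n"
| "valid_node (Head n j) \<longleftrightarrow> j < 2 ^ n"
| "valid_node (Seg a b) \<longleftrightarrow> 1 \<le> a \<and> a < b \<and> b \<le> 2"

definition node_at :: "bool list \<Rightarrow> node" where
  "node_at p = fold (\<lambda>c v. child v c) p (Full 0 0)"

definition node_cell :: "node \<Rightarrow> real set" where
  "node_cell v = node_set v \<inter> {0<..<2}"

lemma node_at_Nil [simp]: "node_at [] = Full 0 0"
  by (simp add: node_at_def)

lemma node_at_snoc [simp]: "node_at (p @ [c]) = child (node_at p) c"
  by (simp add: node_at_def)

lemma valid_child: "valid_node v \<Longrightarrow> valid_node (child v c)"
proof (cases v)
  case (Full n j)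
  moreover assume "valid_node v"
  ultimately show ?thesis
    using tail_start_bounds[of j n] spare_len_pos[of n] tail_len_pos[of "Suc n"]
    by (auto simp: spare_start_def spare_len_def)
qed auto

lemma valid_node_at: "valid_node (node_at p)"
  by (induction p rule: rev_induct) (auto intro: valid_child)

lemma node_set_child_Un:
  "valid_node v \<Longrightarrow> node_set (child v True) \<union> node_set (child v False) = node_set v"
proof (cases v)
  case (Full n j)
  then show ?thesis using head_spare_split(1)[of n j] by auto
next
  case (Head n j)
  then show ?thesis using tail_ivl_children(1)[of n j] dyadic_ivl_children(1)[of n j] by auto
qed auto

lemma node_set_child_disjoint:
  "valid_node v \<Longrightarrow> node_set (child v True) \<inter> node_set (child v False) = {}"
proof (cases v)
  case (Full n j)
  moreover assume "valid_node v"
  ultimately have "dyadic_ivl n j \<inter> tail_ivl n j = {}"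
    by (simp add: dyadic_tail_disjoint)
  then show ?thesis
    using Full head_spare_split[of n j] by auto
next
  case (Head n j)
  moreover assume "valid_node v"
  ultimately have "2 * j < 2 ^ Suc n" "2 * j + 1 < 2 ^ Suc n" by auto
  then have "dyadic_ivl (Suc n) (2 * j) \<inter> tail_ivl (Suc n) (2 * j + 1) = {}"
    "tail_ivl (Suc n) (2 * j) \<inter> dyadic_ivl (Suc n) (2 * j + 1) = {}"
    by (metis dyadic_tail_disjoint Int_commute)+
  then show ?thesis
    using Head tail_ivl_children(2)[of n j] dyadic_ivl_children(2)[of n j] by auto
qed auto

lemma node_cell_child_Un:
  "valid_node v \<Longrightarrow> node_cell (child v True) \<union> node_cell (child v False) = node_cell v"
  using node_set_child_Un[of v] by (auto simp: node_cell_def)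

lemma node_cell_child_disjoint:
  "valid_node v \<Longrightarrow> node_cell (child v True) \<inter> node_cell (child v False) = {}"
  using node_set_child_disjoint[of v] by (auto simp: node_cell_def)

lemma node_cell_root: "node_cell (Full 0 0) = {0<..<2}"
  by (auto simp: node_cell_def dyadic_ivl_def tail_ivl_def tail_len_def)

lemma sets_node_set [measurable]: "node_set v \<in> sets lebesgue"
  by (cases v) auto

lemma finite_measure_I02: "finite_measure I02"
  by (rule finite_measure_lebesgue_on) simp

lemma sets_I02: "A \<in> sets lebesgue \<Longrightarrow> A \<subseteq> {0<..<2} \<Longrightarrow> A \<in> sets I02"
  by (simp add: sets_restrict_space_iff)

lemma measure_I02: "A \<in> sets lebesgue \<Longrightarrow> A \<subseteq> {0<..<2} \<Longrightarrow> measure I02 A = measure lebesgue A"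
  by (simp add: measure_restrict_space)

lemma measure_I02_Ico: "0 < a \<Longrightarrow> a \<le> b \<Longrightarrow> b \<le> 2 \<Longrightarrow> measure I02 {a..<b} = b - a"
  by (subst measure_I02) auto

lemma sets_node_cell: "node_cell v \<in> sets I02"
  by (rule sets_I02) (auto simp: node_cell_def)

lemma measure_node_cell_ge:
  assumes "j < 2 ^ n"
  shows "measure I02 (node_cell (Full n j)) \<ge> 1 / 2 ^ n" and "measure I02 (node_cell (Head n j)) \<ge> 1 / 2 ^ n"
proof -
  define a b where "a = real j / 2 ^ n" and "b = (real j + 1) / 2 ^ n"
  have "b \<le> 1" using dyadic_end_le_1[OF assms] by (simp add: b_def)
  have "b - a = 1 / 2 ^ n" by (simp add: a_def b_def diff_divide_distrib[symmetric])
  have J: "dyadic_ivl n j = {a..<b}" and "0 \<le> a" by (simp_all add: dyadic_ivl_def a_def b_def)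
  have sub: "{a<..<b} \<subseteq> node_cell v" if "v = Full n j \<or> v = Head n j" for v
    using that J \<open>0 \<le> a\<close> \<open>b \<le> 1\<close> by (auto simp: node_cell_def)
  have "measure I02 {a<..<b} = 1 / 2 ^ n"
  proof -
    have "a \<le> b" by (simp add: a_def b_def divide_right_mono)
    then show ?thesis
      using \<open>0 \<le> a\<close> \<open>b \<le> 1\<close> \<open>b - a = 1 / 2 ^ n\<close> by (subst measure_I02) auto
  qed
  then show "measure I02 (node_cell (Full n j)) \<ge> 1 / 2 ^ n" "measure I02 (node_cell (Head n j)) \<ge> 1 / 2 ^ n"
    using sub sets_node_cell
    by (metis finite_measure.finite_measure_mono[OF finite_measure_I02])+
qed

lemma node_cell_Seg: "valid_node (Seg a b) \<Longrightarrow> node_cell (Seg a b) = {a..<b}"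
  by (auto simp: node_cell_def)

lemma node_cell_Seg_subset: "valid_node (Seg a b) \<Longrightarrow> node_cell (Seg a b) \<subseteq> {1..<2}"
  by (auto simp: node_cell_def)

lemma measure_node_cell_pos: "valid_node v \<Longrightarrow> 0 < measure I02 (node_cell v)"
proof (cases v)
  case (Seg a b)
  moreover assume "valid_node v"
  ultimately show ?thesis by (simp add: node_cell_Seg measure_I02_Ico)
qed (auto intro: less_le_trans[OF _ measure_node_cell_ge(1)] less_le_trans[OF _ measure_node_cell_ge(2)])

interpretation tree: binary_partition_tree I02 "\<lambda>p. node_cell (node_at p)"
proof (rule binary_partition_tree.intro[OF finite_measure_I02], unfold_locales)
qed (simp_all add: sets_node_cell node_cell_root measure_node_cell_pos valid_node_at
    node_cell_child_Un node_cell_child_disjoint)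

lemma node_at_length:
  "(node_at p = Full n j \<longrightarrow> length p = 2 * n) \<and> (node_at p = Head n j \<longrightarrow> length p = 2 * n + 1)"
proof (induction p arbitrary: n j rule: rev_induct)
  case (snoc c p)
  then show ?case by (cases "node_at p") auto
qed simp

lemma node_at_Full_ex: "j < 2 ^ n \<Longrightarrow> \<exists>p. node_at p = Full n j"
proof (induction n arbitrary: j)
  case 0
  then show ?case by (intro exI[of _ "[]"]) simp
next
  case (Suc n)
  then have "j div 2 < 2 ^ n" by auto
  then obtain p where p: "node_at p = Full n (j div 2)" using Suc.IH by blast
  have "node_at ((p @ [True]) @ [even j]) = child (child (Full n (j div 2)) True) (even j)"
    by (simp only: node_at_snoc p)
  also have "\<dots> = Full (Suc n) j"
    by (cases "even j") (auto elim: evenE oddE)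
  finally show ?case by blast
qed

lemma node_at_Seg_ex:
  assumes j: "j < 2 ^ n"
  shows "i < 2 ^ m \<Longrightarrow> \<exists>p. node_at p =
    Seg (spare_start n j + real i * spare_len n / 2 ^ m) (spare_start n j + (real i + 1) * spare_len n / 2 ^ m)"
proof (induction m arbitrary: i)
  case 0
  obtain p where "node_at p = Full n j" using node_at_Full_ex[OF j] by blast
  then have "node_at (p @ [False]) = spare_seg n j" by simp
  then show ?case using 0 by (auto simp del: node_at_snoc)
next
  case (Suc m)
  define a w where "a = spare_start n j" and "w = spare_len n"
  have "i div 2 < 2 ^ m" using Suc.prems by auto
  from Suc.IH[OF this] obtain p where
    p: "node_at p = Seg (a + real (i div 2) * w / 2 ^ m) (a + (real (i div 2) + 1) * w / 2 ^ m)"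
    unfolding a_def w_def by blast
  have "node_at (p @ [even i]) = Seg (a + real i * w / 2 ^ Suc m) (a + (real i + 1) * w / 2 ^ Suc m)"
  proof (cases "even i")
    case True
    then obtain k where "i = 2 * k" by (elim evenE)
    then show ?thesis using p by (simp add: field_simps)
  next
    case False
    then obtain k where "i = 2 * k + 1" by (elim oddE)
    then show ?thesis using p by (simp add: field_simps)
  qed
  then show ?case unfolding a_def w_def by blast
qed

section \<open>Completeness\<close>

lemma grid_cell_ex:
  fixes a b t :: real
  assumes "a < b" "a \<le> t" "t < b"
  shows "\<exists>i < 2 ^ k. a + real i * (b - a) / 2 ^ k \<le> t \<and> t < a + (real i + 1) * (b - a) / 2 ^ k"
proof -
  define s where "s = (t - a) * 2 ^ k / (b - a)"
  have "0 \<le> s" "s < 2 ^ k" using assms by (simp_all add: s_def field_simps)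
  define i where "i = nat \<lfloor>s\<rfloor>"
  have "real i \<le> s" "s < real i + 1" using \<open>0 \<le> s\<close> by (simp_all add: i_def)
  moreover from this have "i < 2 ^ k" using \<open>s < 2 ^ k\<close>
    by (metis le_less_trans of_nat_less_iff of_nat_numeral of_nat_power)
  moreover have "a + real i * (b - a) / 2 ^ k \<le> t \<longleftrightarrow> real i \<le> s"
    "t < a + (real i + 1) * (b - a) / 2 ^ k \<longleftrightarrow> s < real i + 1"
    using assms by (simp_all add: s_def field_simps)
  ultimately show ?thesis by blast
qed

lemma tail_or_spare:
  assumes "1 \<le> t" "t < 2"
  shows "(\<exists>i < 2 ^ m. t \<in> tail_ivl m i) \<or>
    (\<exists>n j. n < m \<and> j < 2 ^ n \<and> t \<in> spare_ivl n j)"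
proof (induction m)
  case 0
  then show ?case using assms by (auto simp: tail_ivl_def tail_len_def)
next
  case (Suc m)
  then show ?case
  proof (elim disjE exE conjE)
    fix i assume i: "i < 2 ^ m" and t: "t \<in> tail_ivl m i"
    then have "t \<in> tail_ivl (Suc m) (2 * i) \<or> t \<in> tail_ivl (Suc m) (2 * i + 1)
        \<or> t \<in> spare_ivl m i"
      using head_spare_split(1)[of m i] tail_ivl_children(1)[of m i] by blast
    moreover have "2 * i < 2 ^ Suc m" "2 * i + 1 < 2 ^ Suc m" using i by auto
    ultimately show ?thesis using i by blast
  qed (auto intro: less_SucI)
qed

lemma integrable_if_L2_02: "f \<in> L2_02 \<Longrightarrow> integrable I02 f"
  using finite_measure.square_integrable_imp_integrable[OF finite_measure_I02]
  by (auto simp: L2_02_def)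

context
  fixes f :: "real \<Rightarrow> real"
  assumes f: "f \<in> L2_02"
    and cell_integrals: "\<And>p. (LINT x:node_cell (node_at p)|I02. f x) = 0"
begin

lemma integrable_f: "integrable I02 f"
  using f by (rule integrable_if_L2_02)

lemma set_integrable_f: "A \<in> sets lebesgue \<Longrightarrow> set_integrable I02 A f"
proof -
  assume "A \<in> sets lebesgue"
  then have "set_integrable I02 (A \<inter> {0<..<2}) f"
    by (intro set_integrable_if_integrable sets_I02 integrable_f) auto
  then show ?thesis
    unfolding set_integrable_def by (rule Bochner_Integration.integrable_cong[THEN iffD1, rotated -1])
      (auto simp: indicator_def)
qed

lemma set_borel_measurable_f:
  "A \<in> sets lebesgue \<Longrightarrow> (\<lambda>x. indicator A x *\<^sub>R f x) \<in> borel_measurable I02"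
  using set_integrable_f by (auto simp: set_integrable_def)

lemma set_integral_Int_interval: "(LINT x:A \<inter> {0<..<2}|I02. f x) = (LINT x:A|I02. f x)"
  unfolding set_lebesgue_integral_def
  by (rule Bochner_Integration.integral_cong) (auto simp: indicator_def)

lemma set_integral_Un_f:
  "A \<in> sets lebesgue \<Longrightarrow> B \<in> sets lebesgue \<Longrightarrow> A \<inter> B = {} \<Longrightarrow>
    (LINT x:A \<union> B|I02. f x) = (LINT x:A|I02. f x) + (LINT x:B|I02. f x)"
  by (intro set_integral_Un set_integrable_f)

lemma set_integral_node_set: "(LINT x:node_set (node_at p)|I02. f x) = 0"
  using cell_integrals[of p] set_integral_Int_interval by (simp add: node_cell_def)

lemma set_integral_dyadic_tail:
  assumes "j < 2 ^ n"
  shows "(LINT x:dyadic_ivl n j|I02. f x) + (LINT x:tail_ivl n j|I02. f x) = 0"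
proof -
  obtain p where "node_at p = Full n j" using node_at_Full_ex[OF assms] by blast
  then show ?thesis
    using set_integral_node_set[of p] set_integral_Un_f[OF _ _ dyadic_tail_disjoint[OF assms assms]] by simp
qed

lemma set_integral_dyadic_eq_small_tail_part:
  assumes "j < 2 ^ n"
  shows "\<exists>E \<in> sets lebesgue. E \<subseteq> tail_ivl n j \<and> measure I02 E \<le> 1 / (real (n + k + 1) * 2 ^ n)
           \<and> (LINT x:dyadic_ivl n j|I02. f x) = - (LINT x:E|I02. f x)"
  using assms
proof (induction k arbitrary: n j)
  case 0
  have "measure I02 (tail_ivl n j) = tail_len n"
    using tail_ivl_subset[OF 0] tail_len_pos[of n] by (subst measure_I02) (auto simp: tail_ivl_def)
  then show ?case
    using set_integral_dyadic_tail[OF 0] by (intro bexI[of _ "tail_ivl n j"]) (auto simp: tail_len_def)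
next
  case (Suc k)
  have "2 * j < 2 ^ Suc n" "2 * j + 1 < 2 ^ Suc n" using Suc.prems by auto
  with Suc.IH obtain E1 E2 where
    E1: "E1 \<in> sets lebesgue" "E1 \<subseteq> tail_ivl (Suc n) (2 * j)" "measure I02 E1 \<le> 1 / (real (Suc n + k + 1) * 2 ^ Suc n)"
      "(LINT x:dyadic_ivl (Suc n) (2 * j)|I02. f x) = - (LINT x:E1|I02. f x)" and
    E2: "E2 \<in> sets lebesgue" "E2 \<subseteq> tail_ivl (Suc n) (2 * j + 1)" "measure I02 E2 \<le> 1 / (real (Suc n + k + 1) * 2 ^ Suc n)"
      "(LINT x:dyadic_ivl (Suc n) (2 * j + 1)|I02. f x) = - (LINT x:E2|I02. f x)"
    by meson
  have disj: "E1 \<inter> E2 = {}" using E1(2) E2(2) tail_ivl_children(2)[of n j] by blast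
  have sub: "E1 \<union> E2 \<subseteq> tail_ivl n j"
    using E1(2) E2(2) tail_ivl_children(1)[of n j] head_spare_split(1)[of n j] by blast
  have "E1 \<in> sets I02" "E2 \<in> sets I02"
    using E1(1,2) E2(1,2) tail_ivl_subset[of "2 * j" "Suc n"] tail_ivl_subset[of "2 * j + 1" "Suc n"]
      \<open>2 * j < 2 ^ Suc n\<close> \<open>2 * j + 1 < 2 ^ Suc n\<close> by (auto intro!: sets_I02)
  then have "measure I02 (E1 \<union> E2) = measure I02 E1 + measure I02 E2"
    using disj by (rule finite_measure.finite_measure_Union[OF finite_measure_I02])
  also have "\<dots> \<le> 2 * (1 / (real (Suc n + k + 1) * 2 ^ Suc n))"
    using E1(3) E2(3) by linarith
  also have "\<dots> = 1 / (real (n + Suc k + 1) * 2 ^ n)"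
    by (simp add: divide_simps)
  finally have "measure I02 (E1 \<union> E2) \<le> 1 / (real (n + Suc k + 1) * 2 ^ n)" .
  moreover have "(LINT x:dyadic_ivl n j|I02. f x) = - (LINT x:E1 \<union> E2|I02. f x)"
  proof -
    have "(LINT x:dyadic_ivl n j|I02. f x)
        = (LINT x:dyadic_ivl (Suc n) (2 * j)|I02. f x) + (LINT x:dyadic_ivl (Suc n) (2 * j + 1)|I02. f x)"
      unfolding dyadic_ivl_children(1)[of n j, symmetric]
      by (intro set_integral_Un_f dyadic_ivl_children(2) sets_lebesgue_ivl)
    then show ?thesis using set_integral_Un_f[OF E1(1) E2(1) disj] E1(4) E2(4) by linarith
  qed
  ultimately show ?case using sub E1(1) E2(1) by (intro bexI[of _ "E1 \<union> E2"]) auto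
qed

lemma set_integral_dyadic_ivl:
  assumes "j < 2 ^ n"
  shows "(LINT x:dyadic_ivl n j|I02. f x) = 0"
proof -
  have "\<bar>LINT x:dyadic_ivl n j|I02. f x\<bar> \<le> e" if "0 < e" for e
  proof -
    obtain d where "0 < d" and small: "\<And>E. E \<in> sets I02 \<Longrightarrow> measure I02 E < d \<Longrightarrow> \<bar>LINT x:E|I02. f x\<bar> \<le> e"
      using finite_measure.set_integral_small_measure[OF finite_measure_I02 _ _ \<open>0 < e\<close>] f
      by (auto simp: L2_02_def)
    obtain k where k: "inverse (real (Suc k)) < d" using reals_Archimedean[OF \<open>0 < d\<close>] by blast
    obtain E where E: "E \<in> sets lebesgue" "E \<subseteq> tail_ivl n j" "measure I02 E \<le> 1 / (real (n + k + 1) * 2 ^ n)"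
      "(LINT x:dyadic_ivl n j|I02. f x) = - (LINT x:E|I02. f x)"
      using set_integral_dyadic_eq_small_tail_part[OF assms] by blast
    have "real (Suc k) \<le> real (n + k + 1) * 2 ^ n"
    proof -
      have "real (Suc k) \<le> real (n + k + 1)" by simp
      also have "\<dots> \<le> real (n + k + 1) * 2 ^ n" by simp
      finally show ?thesis .
    qed
    then have "1 / (real (n + k + 1) * 2 ^ n) \<le> inverse (real (Suc k))"
      unfolding inverse_eq_divide by (intro frac_le) simp_all
    then have "measure I02 E < d" using E(3) k by linarith
    moreover have "E \<in> sets I02" using E(1,2) tail_ivl_subset[OF assms] by (intro sets_I02) auto
    ultimately show ?thesis using small E(4) by simp
  qed
  then show ?thesis by (metis abs_le_zero_iff dense not_le)
qed

lemma set_integral_tail_ivl: "j < 2 ^ n \<Longrightarrow> (LINT x:tail_ivl n j|I02. f x) = 0"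
  using set_integral_dyadic_tail[of j n] set_integral_dyadic_ivl[of j n] by simp

lemma set_integral_lessThan_extend:
  assumes "a \<le> b" "(LINT x:{..<a}|I02. f x) = 0" "(LINT x:{a..<b}|I02. f x) = 0"
  shows "(LINT x:{..<b}|I02. f x) = 0"
proof -
  have "(LINT x:{..<a} \<union> {a..<b}|I02. f x) = (LINT x:{..<a}|I02. f x) + (LINT x:{a..<b}|I02. f x)"
    by (rule set_integral_Un_f) auto
  moreover have "{..<a} \<union> {a..<b} = {..<b}" using assms(1) by auto
  ultimately show ?thesis using assms(2,3) by simp
qed

lemma set_integral_lessThan_nonpos: "t \<le> 0 \<Longrightarrow> (LINT x:{..<t}|I02. f x) = 0"
proof -
  assume "t \<le> 0"
  then have "{..<t} \<inter> {0<..<2} = {}" by auto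
  then show ?thesis using set_integral_Int_interval[of "{..<t}"] by (simp add: set_lebesgue_integral_def)
qed

lemma set_integral_lessThan_dyadic: "j \<le> 2 ^ n \<Longrightarrow> (LINT x:{..<real j / 2 ^ n}|I02. f x) = 0"
proof (induction j)
  case 0
  then show ?case by (simp add: set_integral_lessThan_nonpos)
next
  case (Suc j)
  have "real j / 2 ^ n \<le> real (Suc j) / 2 ^ n" by (simp add: divide_right_mono)
  moreover have "(LINT x:{..<real j / 2 ^ n}|I02. f x) = 0" using Suc by simp
  moreover have "(LINT x:{real j / 2 ^ n ..< real (Suc j) / 2 ^ n}|I02. f x) = 0"
    using set_integral_dyadic_ivl[of j n] Suc.prems by (simp add: dyadic_ivl_def add.commute)
  ultimately show ?case by (rule set_integral_lessThan_extend)
qed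

lemma set_integral_lessThan_tail_start: "j < 2 ^ n \<Longrightarrow> (LINT x:{..<tail_start n j}|I02. f x) = 0"
proof (induction n arbitrary: j)
  case 0
  then show ?case using set_integral_lessThan_dyadic[of 1 0] by simp
next
  case (Suc n)
  have "j div 2 < 2 ^ n" using Suc.prems by auto
  then have IH: "(LINT x:{..<tail_start n (j div 2)}|I02. f x) = 0" by (rule Suc.IH)
  show ?case
  proof (cases "even j")
    case False
    then obtain k where j: "j = 2 * k + 1" by (elim oddE)
    with Suc.prems have "2 * k < 2 ^ Suc n" by simp
    have "tail_start n k \<le> tail_start n k + tail_len (Suc n)"
      using tail_len_pos[of "Suc n"] by simp
    moreover have "(LINT x:{..<tail_start n k}|I02. f x) = 0" using IH by (simp add: j)
    moreover have "(LINT x:{tail_start n k ..< tail_start n k + tail_len (Suc n)}|I02. f x) = 0"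
      using set_integral_tail_ivl[of "2 * k" "Suc n"] \<open>2 * k < 2 ^ Suc n\<close> by (simp add: tail_ivl_def)
    ultimately have "(LINT x:{..<tail_start n k + tail_len (Suc n)}|I02. f x) = 0"
      by (rule set_integral_lessThan_extend)
    then show ?thesis by (simp add: j)
  qed (use IH in simp)
qed

lemma set_integral_lessThan_spare_grid:
  assumes j: "j < 2 ^ n"
  shows "i \<le> 2 ^ m \<Longrightarrow> (LINT x:{..<spare_start n j + real i * spare_len n / 2 ^ m}|I02. f x) = 0"
proof (induction i)
  case 0
  have j': "2 * j + 1 < 2 ^ Suc n" using j by simp
  define a where "a = tail_start (Suc n) (2 * j + 1)"
  have "spare_start n j + real 0 * spare_len n / 2 ^ m = a + tail_len (Suc n)"
    by (simp add: a_def spare_start_def)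
  moreover have "(LINT x:{..<a + tail_len (Suc n)}|I02. f x) = 0"
  proof (rule set_integral_lessThan_extend)
    show "a \<le> a + tail_len (Suc n)" using tail_len_pos[of "Suc n"] by simp
    show "(LINT x:{..<a}|I02. f x) = 0"
      unfolding a_def by (rule set_integral_lessThan_tail_start[OF j'])
    show "(LINT x:{a ..< a + tail_len (Suc n)}|I02. f x) = 0"
      using set_integral_tail_ivl[OF j'] unfolding a_def tail_ivl_def .
  qed
  ultimately show ?case by (simp only:)
next
  case (Suc i)
  define l r where "l = spare_start n j + real i * spare_len n / 2 ^ m"
    and "r = spare_start n j + (real i + 1) * spare_len n / 2 ^ m"
  have "i < 2 ^ m" using Suc.prems by simp
  then obtain p where p: "node_at p = Seg l r"
    unfolding l_def r_def by (rule node_at_Seg_ex[OF j, THEN exE])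
  have "spare_start n j + real (Suc i) * spare_len n / 2 ^ m = r"
    by (simp add: r_def add.commute)
  moreover have "(LINT x:{..<r}|I02. f x) = 0"
  proof (rule set_integral_lessThan_extend)
    show "l \<le> r" using spare_len_pos[of n] by (simp add: l_def r_def divide_right_mono)
    show "(LINT x:{..<l}|I02. f x) = 0"
      unfolding l_def using Suc.IH Suc.prems by simp
    show "(LINT x:{l..<r}|I02. f x) = 0"
      using set_integral_node_set[of p] p by simp
  qed
  ultimately show ?case by (simp only:)
qed

lemma set_integral_lessThan_approx:
  assumes t: "0 \<le> t" "t < 2" and "0 < e"
  shows "\<exists>z. (LINT x:{..<z}|I02. f x) = 0 \<and> \<bar>z - t\<bar> < e"
proof -
  obtain k :: nat where k: "1 / 2 ^ k < e"
    using real_arch_pow_inv[OF \<open>0 < e\<close>, of "1 / 2"] by (auto simp: power_one_over)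
  consider "t < 1" | "\<exists>i < 2 ^ k. t \<in> tail_ivl k i" | "\<exists>n j. n < k \<and> j < 2 ^ n \<and> t \<in> spare_ivl n j"
    using tail_or_spare[of t k] t by force
  then show ?thesis
  proof cases
    case 1
    then obtain i where i: "i < 2 ^ k" "real i / 2 ^ k \<le> t" "t < (real i + 1) / 2 ^ k"
      using grid_cell_ex[of 0 1 t k] t by auto
    have "t - real i / 2 ^ k < 1 / 2 ^ k" using i(3) by (simp add: add_divide_distrib)
    then show ?thesis using i k set_integral_lessThan_dyadic[of i k]
      by (intro exI[of _ "real i / 2 ^ k"]) auto
  next
    case 2
    then obtain i where i: "i < 2 ^ k" "t \<in> tail_ivl k i" by blast
    then have "\<bar>tail_start k i - t\<bar> < 1 / 2 ^ k"
      using tail_len_le[of k] by (auto simp: tail_ivl_def)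
    then show ?thesis using k set_integral_lessThan_tail_start[OF i(1)]
      by (intro exI[of _ "tail_start k i"]) auto
  next
    case 3
    then obtain n j where j: "j < 2 ^ n" and tP: "t \<in> spare_ivl n j"
      by blast
    obtain i where i: "i < 2 ^ k" "spare_start n j + real i * spare_len n / 2 ^ k \<le> t"
        "t < spare_start n j + (real i + 1) * spare_len n / 2 ^ k"
      using grid_cell_ex[of "spare_start n j" "spare_start n j + spare_len n" t k] tP spare_len_pos[of n] by auto
    have "(1::real) / 2 ^ n \<le> 1" by simp
    then have "spare_len n \<le> 1"
      using tail_len_le[of n] tail_len_pos[of "Suc n"] unfolding spare_len_def by linarith
    then have "spare_len n / 2 ^ k \<le> 1 / 2 ^ k" by (simp add: divide_right_mono)
    moreover have "t - (spare_start n j + real i * spare_len n / 2 ^ k) < spare_len n / 2 ^ k"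
      using i(3) by (simp add: algebra_simps add_divide_distrib)
    ultimately show ?thesis using i(1,2) k set_integral_lessThan_spare_grid[OF j, of i k]
      by (intro exI[of _ "spare_start n j + real i * spare_len n / 2 ^ k"]) auto
  qed
qed

lemma continuous_set_integral_lessThan: "continuous_on UNIV (\<lambda>t. LINT x:{..<t}|I02. f x)"
proof (rule continuous_on_sequentiallyI)
  fix z :: "nat \<Rightarrow> real" and t :: real
  assume z: "z \<longlonglongrightarrow> t"
  have "AE x in lebesgue. x \<noteq> t" by (rule AE_completion[OF AE_lborel_singleton])
  then have ae: "AE x in I02. x \<noteq> t" by (subst AE_restrict_space_iff) auto
  show "(\<lambda>k. LINT x:{..<z k}|I02. f x) \<longlonglongrightarrow> (LINT x:{..<t}|I02. f x)"
    unfolding set_lebesgue_integral_def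
  proof (rule integral_dominated_convergence[where w = "\<lambda>x. \<bar>f x\<bar>"])
    show "(\<lambda>x. indicator {..<t} x *\<^sub>R f x) \<in> borel_measurable I02"
      "(\<lambda>x. indicator {..<z k} x *\<^sub>R f x) \<in> borel_measurable I02" for k
      by (rule set_borel_measurable_f, simp)+
    show "integrable I02 (\<lambda>x. \<bar>f x\<bar>)" using integrable_f by (rule integrable_abs)
    show "AE x in I02. norm (indicator {..<z k} x *\<^sub>R f x) \<le> \<bar>f x\<bar>" for k
      by (intro AE_I2) (auto simp: indicator_def)
    show "AE x in I02. (\<lambda>k. indicator {..<z k} x *\<^sub>R f x) \<longlonglongrightarrow> indicator {..<t} x *\<^sub>R f x"
      using ae
    proof eventually_elim
      case (elim x)
      have "eventually (\<lambda>k. indicator {..<z k} x = (indicator {..<t} x :: real)) sequentially"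
      proof (cases "x < t")
        case True
        with order_tendstoD(1)[OF z] have "eventually (\<lambda>k. x < z k) sequentially" by blast
        then show ?thesis using True by (auto elim!: eventually_mono)
      next
        case False
        with elim have "t < x" by simp
        with order_tendstoD(2)[OF z] have "eventually (\<lambda>k. z k < x) sequentially" by blast
        then show ?thesis using False by (auto elim!: eventually_mono)
      qed
      then show ?case by (auto intro: tendsto_eventually elim!: eventually_mono)
    qed
  qed
qed

lemma set_integral_lessThan: "(LINT x:{..<t}|I02. f x) = 0"
proof -
  let ?Z = "{z. (LINT x:{..<z}|I02. f x) = 0}"
  consider "t < 0" | "0 \<le> t" "t < 2" | "2 \<le> t" by linarith
  then show ?thesis
  proof cases
    case 2
    then have "t \<in> closure ?Z"
      using set_integral_lessThan_approx by (force simp: closure_approachable dist_real_def)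
    then show ?thesis
      using continuous_constant_on_closure[of ?Z "\<lambda>t. LINT x:{..<t}|I02. f x"]
        continuous_on_subset[OF continuous_set_integral_lessThan] by blast
  next
    case 3
    then have "{..<t} \<inter> {0<..<2} = node_cell (node_at [])" by (auto simp: node_cell_root)
    then show ?thesis using cell_integrals[of "[]"] set_integral_Int_interval[of "{..<t}"] by simp
  qed (simp add: set_integral_lessThan_nonpos)
qed

lemma AE_eq_0_if_cell_integrals_eq_0: "AE x in I02. f x = 0"
proof (rule AE_eq_0_if_set_integrals_greaterThan)
  show "(LINT x:{t<..}|I02. f x) = 0" for t
  proof -
    have "(LINT x:{..t}|I02. f x) = (LINT x:{..<t}|I02. f x)"
    proof -
      have "AE x in lebesgue. x \<noteq> t" by (rule AE_completion[OF AE_lborel_singleton])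
      then have "AE x in I02. x \<noteq> t" by (subst AE_restrict_space_iff) auto
      then show ?thesis
        unfolding set_lebesgue_integral_def
        by (intro integral_cong_AE set_borel_measurable_f) (auto elim!: eventually_mono simp: indicator_def)
    qed
    moreover have "(LINT x:{..t} \<union> {t<..}|I02. f x) = (LINT x:{..t}|I02. f x) + (LINT x:{t<..}|I02. f x)"
      by (intro set_integral_Un_f) auto
    moreover have "(LINT x:{..t} \<union> {t<..}|I02. f x) = (LINT x:{..<2}|I02. f x)"
    proof -
      have "{..t} \<union> {t<..} = UNIV" "{..<2} \<inter> {0<..<2} = UNIV \<inter> {0<..<2::real}" by auto
      then show ?thesis using set_integral_Int_interval[of UNIV] set_integral_Int_interval[of "{..<2}"] by simp
    qed
    ultimately show ?thesis using set_integral_lessThan[of t] set_integral_lessThan[of 2] by simp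
  qed
qed (simp_all add: integrable_f)

end

(* Only the Haar functions of Head cells can be negative on (0,1); the factor 8 postpones the
   Head cell of depth 2n+1 until all Full cells of depth at most 16n+6 have been listed. *)
definition rank :: "bool list \<Rightarrow> nat" where
  "rank p = (case node_at p of Head n j \<Rightarrow> 8 * length p | _ \<Rightarrow> length p)"

lemma length_le_rank: "length p \<le> rank p"
  by (cases "node_at p") (auto simp: rank_def)

lemma finite_rank_le: "finite {p. rank p \<le> n}"
  by (rule finite_subset[OF _ finite_lists_length_le[of UNIV n]]) (auto intro: le_trans[OF length_le_rank])

definition enum :: "nat \<Rightarrow> bool list" where
  "enum = (SOME e. bij e \<and> incseq (\<lambda>k. rank (e k)))"

lemma bij_enum: "bij enum" and incseq_rank_enum: "incseq (\<lambda>k. rank (enum k))"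
  using someI_ex[OF incseq_enumeration_ex[OF infinite_UNIV_listI finite_rank_le]]
  by (simp_all add: enum_def)

lemma filterlim_rank_enum: "filterlim (\<lambda>k. rank (enum k)) at_top sequentially"
  by (rule filterlim_enumeration_at_top[OF infinite_UNIV_listI finite_rank_le bij_is_surj[OF bij_enum] incseq_rank_enum])

definition basis :: "nat \<Rightarrow> real \<Rightarrow> real" where
  "basis k = (if k = 1 then (\<lambda>_. 1 / sqrt 2) else tree.haar (enum (k - 2)))"

lemma basis_Suc_Suc: "basis (Suc (Suc k)) = tree.haar (enum k)"
  by (simp add: basis_def)

lemma measure_I02_space: "measure I02 {0<..<2} = 2"
  by (subst measure_I02) auto

lemma haar_in_L2_02: "tree.haar p \<in> L2_02"
  by (simp add: L2_02_def tree.integrable_haar_sq)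

lemma const_in_L2_02: "(\<lambda>_. c) \<in> L2_02"
  by (simp add: L2_02_def finite_measure.integrable_const[OF finite_measure_I02])

lemma orthonormal_basis:
  assumes "1 \<le> i" "1 \<le> j"
  shows "inner02 (basis i) (basis j) = (if i = j then 1 else 0)"
proof -
  have const: "inner02 (\<lambda>_. 1 / sqrt 2) (\<lambda>_. 1 / sqrt 2) = 1"
    using measure_I02_space by (simp add: inner02_def)
  have mixed: "inner02 (\<lambda>_. 1 / sqrt 2) (tree.haar p) = 0" "inner02 (tree.haar p) (\<lambda>_. 1 / sqrt 2) = 0" for p
    using tree.integral_haar[of p] by (simp_all add: inner02_def)
  have haar: "inner02 (tree.haar p) (tree.haar q) = (if p = q then 1 else 0)" for p q
    by (simp add: inner02_def tree.integral_haar_mult_haar)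
  consider "i = 1" "j = 1" | "i = 1" "j \<noteq> 1" | "i \<noteq> 1" "j = 1" | "i \<noteq> 1" "j \<noteq> 1" by blast
  then show ?thesis
  proof cases
    case 4
    then have "enum (i - 2) = enum (j - 2) \<longleftrightarrow> i = j"
      using assms bij_is_inj[OF bij_enum] by (auto dest: injD)
    with 4 show ?thesis by (simp add: basis_def haar)
  qed (simp_all add: basis_def const mixed)
qed

lemma basis_complete:
  assumes f: "f \<in> L2_02" and orth: "\<forall>k\<ge>1. inner02 f (basis k) = 0"
  shows "AE x in I02. f x = 0"
proof -
  have mean: "integral\<^sup>L I02 f = 0"
    using orth[rule_format, of 1] by (simp add: inner02_def basis_def)
  have haar: "integral\<^sup>L I02 (\<lambda>x. f x * tree.haar p x) = 0" for p
  proof -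
    obtain k where "enum k = p" using bij_enum by (metis bij_pointE)
    then show ?thesis using orth[rule_format, of "Suc (Suc k)"] by (simp add: inner02_def basis_Suc_Suc)
  qed
  have "(LINT x:node_cell (node_at p)|I02. f x) = 0" for p
    using tree.set_integral_cell_eq_0[OF integrable_if_L2_02[OF f] mean haar] by simp
  with f show ?thesis by (rule AE_eq_0_if_cell_integrals_eq_0)
qed

theorem ONB02_basis: "ONB02 basis"
  unfolding ONB02_def
proof (intro conjI allI impI ballI)
  show "basis k \<in> L2_02" for k
    by (simp add: basis_def haar_in_L2_02 const_in_L2_02)
qed (simp_all add: orthonormal_basis basis_complete)

section \<open>Positive and negative parts on (0,1)\<close>

lemma measure_node_cell_Full_le:
  assumes "j < 2 ^ n"
  shows "measure I02 (node_cell (Full n j)) \<le> 2 / 2 ^ n"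
proof -
  let ?D = "{real j / 2 ^ n .. (real j + 1) / 2 ^ n} \<inter> {0<..<2}"
  have sets: "?D \<in> sets I02" "tail_ivl n j \<in> sets I02"
    using tail_ivl_subset[OF assms] by (auto intro!: sets_I02)
  have "node_cell (Full n j) \<subseteq> ?D \<union> tail_ivl n j"
    by (auto simp: node_cell_def dyadic_ivl_def)
  then have "measure I02 (node_cell (Full n j)) \<le> measure I02 (?D \<union> tail_ivl n j)"
    using sets sets_node_cell by (intro finite_measure.finite_measure_mono[OF finite_measure_I02]) auto
  also have "\<dots> \<le> measure I02 ?D + measure I02 (tail_ivl n j)"
    using sets by (intro measure_subadditive) (auto simp: finite_measure.emeasure_finite[OF finite_measure_I02])
  also have "measure I02 ?D \<le> 1 / 2 ^ n"
  proof -
    have "measure I02 ?D = measure lebesgue ?D" by (subst measure_I02) auto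
    also have "\<dots> \<le> measure lebesgue {real j / 2 ^ n .. (real j + 1) / 2 ^ n}"
      by (intro measure_mono_fmeasurable) auto
    also have "\<dots> = 1 / 2 ^ n" by (simp add: divide_right_mono diff_divide_distrib[symmetric])
    finally show ?thesis .
  qed
  also have "measure I02 (tail_ivl n j) = tail_len n"
    using tail_ivl_subset[OF assms] tail_len_pos[of n] by (subst measure_I02) (auto simp: tail_ivl_def)
  finally show ?thesis using tail_len_le[of n] by simp
qed

lemma haar_Seg_eq_0:
  assumes "node_at p = Seg a b" "x < 1"
  shows "tree.haar p x = 0"
proof (rule tree.haar_outside)
  show "x \<notin> node_cell (node_at p)"
    using node_cell_Seg_subset[of a b] valid_node_at[of p] assms by auto
qed

lemma haar_Full_on_dyadic:
  assumes p: "node_at p = Full n j" and x: "0 < x" "x < 1"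
  shows "tree.haar p x = (if x \<in> dyadic_ivl n j then
           haar_height I02 (node_cell (Head n j)) (node_cell (spare_seg n j))
         else 0)"
proof -
  have "valid_node (spare_seg n j)"
    using valid_child[OF valid_node_at[of p], of False] p by simp
  then have "node_cell (node_at (p @ [False])) \<subseteq> {1..<2}"
    using node_cell_Seg_subset p by simp
  with x have "x \<notin> node_cell (node_at (p @ [False]))" by auto
  moreover have "x \<in> node_cell (node_at (p @ [True])) \<longleftrightarrow> x \<in> dyadic_ivl n j"
    using p x valid_node_at[of p] tail_ivl_subset[of j n] head_spare_split(1)[of n j]
    by (auto simp: node_cell_def)
  ultimately show ?thesis
    using tree.haar_on_child[of x p True] tree.haar_outside[of x p] tree.cell_split[of p] p by auto
qed

lemma haar_Full_nonneg: "node_at p = Full n j \<Longrightarrow> 0 < x \<Longrightarrow> x < 1 \<Longrightarrow> 0 \<le> tree.haar p x"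
  by (simp add: haar_Full_on_dyadic haar_height_nonneg)

lemma haar_Full_sq_ge:
  assumes p: "node_at p = Full n j" and x: "0 < x" "x < 1" "x \<in> dyadic_ivl n j"
  shows "2 ^ n / (4 * ((real n + 1) * (real n + 2))) \<le> (tree.haar p x)\<^sup>2"
proof -
  have j: "j < 2 ^ n" using valid_node_at[of p] p by simp
  define a b where "a = measure I02 (node_cell (Head n j))"
    and "b = measure I02 (node_cell (spare_seg n j))"
  have "0 < a" using measure_node_cell_pos j by (simp add: a_def)
  have "valid_node (spare_seg n j)"
    using valid_child[of "Full n j" False] j by simp
  then have "b = spare_len n"
    using spare_len_pos[of n] by (simp add: b_def node_cell_Seg measure_I02_Ico)
  have "a + b = measure I02 (node_cell (Full n j))"
    unfolding a_def b_def node_cell_child_Un[of "Full n j", OF j[folded valid_node.simps], symmetric]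
    using node_cell_child_disjoint[of "Full n j"] j sets_node_cell
    by (simp add: finite_measure.finite_measure_Union[OF finite_measure_I02])
  then have ab: "a + b \<le> 2 / 2 ^ n" using measure_node_cell_Full_le[OF j] by simp
  have alg: "t / (4 * c) = 1 / (c * t) / ((2 / t) * (2 / t))" if "0 < c" "0 < t" for c t :: real
    using that by (simp add: divide_simps)
  have "2 ^ n / (4 * ((real n + 1) * (real n + 2))) = spare_len n / ((2 / 2 ^ n) * (2 / 2 ^ n))"
    unfolding spare_len_eq by (rule alg) auto
  also have "\<dots> \<le> b / ((a + b) * (a + b))"
    unfolding \<open>b = spare_len n\<close> using \<open>0 < a\<close> spare_len_pos[of n] ab[unfolded \<open>b = spare_len n\<close>]
    by (intro divide_left_mono mult_mono) auto
  also have "\<dots> \<le> b / (a * (a + b))"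
    using \<open>0 < a\<close> \<open>b = spare_len n\<close> spare_len_pos[of n]
    by (intro divide_left_mono mult_right_mono) auto
  also have "\<dots> = (tree.haar p x)\<^sup>2"
    using haar_Full_on_dyadic[OF p x(1,2)] x(3) by (simp add: haar_height_sq a_def b_def)
  finally show ?thesis .
qed

lemma haar_Head_sq_le:
  assumes "node_at p = Head n j"
  shows "(tree.haar p x)\<^sup>2 \<le> 2 ^ (n + 1)"
proof -
  have j: "j < 2 ^ n" using valid_node_at[of p] assms by simp
  have inv_le: "1 / measure I02 (node_cell (Full (Suc n) i)) \<le> 2 ^ Suc n" if "i < 2 ^ Suc n" for i
  proof -
    have "1 / 2 ^ Suc n \<le> measure I02 (node_cell (Full (Suc n) i))"
      using that by (rule measure_node_cell_ge(1))
    moreover have "0 < measure I02 (node_cell (Full (Suc n) i))"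
      using measure_node_cell_pos[of "Full (Suc n) i"] that by simp
    ultimately have "1 / measure I02 (node_cell (Full (Suc n) i)) \<le> 1 / (1 / 2 ^ Suc n)"
      by (intro divide_left_mono) auto
    then show ?thesis by simp
  qed
  have "(tree.haar p x)\<^sup>2 \<le> max (1 / measure I02 (node_cell (Full (Suc n) (2 * j))))
      (1 / measure I02 (node_cell (Full (Suc n) (2 * j + 1))))"
    using tree.haar_sq_le[of p x] assms by simp
  also have "\<dots> \<le> 2 ^ Suc n"
  proof -
    have "2 * j < 2 ^ Suc n" "2 * j + 1 < 2 ^ Suc n" using j by simp_all
    then show ?thesis using inv_le by simp
  qed
  finally show ?thesis by simp
qed

lemma negpart_haar_eq_0:
  assumes x: "0 < x" "x < 1" and p: "(\<forall>n j. node_at p \<noteq> Head n j) \<or> x \<notin> node_cell (node_at p)"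
  shows "negpart (tree.haar p) x = 0"
proof (cases "x \<in> node_cell (node_at p)")
  case True
  with p have "0 \<le> tree.haar p x"
    using x by (cases "node_at p") (auto simp: haar_Full_nonneg haar_Seg_eq_0)
  then show ?thesis by (simp add: negpart_def)
qed (simp add: negpart_def tree.haar_outside)

lemma negpart_haar_sq_le:
  assumes "node_at p = Head n j"
  shows "(negpart (tree.haar p) x)\<^sup>2 \<le> 2 ^ length p"
proof -
  have "(negpart (tree.haar p) x)\<^sup>2 \<le> (tree.haar p x)\<^sup>2"
    by (auto simp: negpart_def max_def)
  also have "\<dots> \<le> 2 ^ (n + 1)" using haar_Head_sq_le[OF assms] .
  also have "\<dots> \<le> 2 ^ length p"
    using node_at_length[of p n j] assms by (intro power_increasing) auto
  finally show ?thesis .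
qed

lemma card_Head_cells_le:
  "card {k \<in> {2..N}. (\<exists>n j. node_at (enum (k - 2)) = Head n j) \<and> x \<in> node_cell (node_at (enum (k - 2)))}
     \<le> rank (enum (N - 2)) div 8 + 1"
  (is "card ?K \<le> _")
proof -
  have "inj_on (\<lambda>k. length (enum (k - 2))) ?K"
  proof (rule inj_onI)
    fix k k' assume kK: "k \<in> ?K" "k' \<in> ?K" and len: "length (enum (k - 2)) = length (enum (k' - 2))"
    then have "enum (k - 2) = enum (k' - 2)"
      using tree.cell_parallel_disjoint[OF not_equal_is_parallel[OF _ len]] by blast
    then show "k = k'" using kK bij_is_inj[OF bij_enum] by (auto dest: injD)
  qed
  moreover have "length (enum (k - 2)) \<le> rank (enum (N - 2)) div 8" if "k \<in> ?K" for k
  proof -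
    from that obtain n j where "node_at (enum (k - 2)) = Head n j" "k \<le> N" by auto
    then have "8 * length (enum (k - 2)) \<le> rank (enum (N - 2))"
      using incseqD[OF incseq_rank_enum, of "k - 2" "N - 2"] by (simp add: rank_def)
    then show ?thesis by simp
  qed
  ultimately have "card ?K \<le> card {..rank (enum (N - 2)) div 8}"
    by (intro card_inj_on_le) auto
  then show ?thesis by simp
qed

lemma sum_negpart_basis_le:
  assumes x: "0 < x" "x < 1" and N: "2 \<le> N"
  defines "s \<equiv> rank (enum (N - 2))"
  shows "(\<Sum>k=1..N. (negpart (basis k) x)\<^sup>2) \<le> (real s + 1) * 2 powr (real s / 8)"
proof -
  define T where "T k = (negpart (basis k) x)\<^sup>2" for k
  define K where "K = {k \<in> {2..N}. (\<exists>n j. node_at (enum (k - 2)) = Head n j) \<and> x \<in> node_cell (node_at (enum (k - 2)))}"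
  have "T k = 0" if "k \<in> {1..N} - K" for k
  proof (cases "k = 1")
    case False
    with that have "k = Suc (Suc (k - 2))" by auto
    with that negpart_haar_eq_0[OF x, of "enum (k - 2)"] show ?thesis
      by (auto simp: T_def K_def basis_def)
  qed (simp add: T_def basis_def negpart_def)
  then have "sum T {1..N} = sum T K" by (intro sum.mono_neutral_right) (auto simp: K_def)
  also have "\<dots> \<le> real (card K) * 2 ^ (s div 8)"
  proof (rule sum_bounded_above)
    fix k assume "k \<in> K"
    then obtain n j where Head: "node_at (enum (k - 2)) = Head n j" and k: "2 \<le> k" "k \<le> N"
      by (auto simp: K_def)
    then have "8 * length (enum (k - 2)) \<le> s"
      using incseqD[OF incseq_rank_enum, of "k - 2" "N - 2"] by (simp add: s_def rank_def)
    then have "length (enum (k - 2)) \<le> s div 8" by simp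
    moreover have "T k \<le> 2 ^ length (enum (k - 2))"
      using negpart_haar_sq_le[OF Head] k by (simp add: T_def basis_def)
    ultimately show "T k \<le> 2 ^ (s div 8)"
      by (meson order_trans one_le_numeral power_increasing)
  qed
  also have "\<dots> \<le> (real s + 1) * 2 powr (real s / 8)"
  proof (intro mult_mono)
    show "real (card K) \<le> real s + 1"
      using card_Head_cells_le[of N x] unfolding K_def s_def by linarith
    have "real (s div 8) \<le> real s / 8" by linarith
    then show "(2::real) ^ (s div 8) \<le> 2 powr (real s / 8)"
      by (simp add: powr_realpow[symmetric] powr_mono)
  qed auto
  finally show ?thesis by (simp add: T_def)
qed

lemma sum_pospart_basis_ge:
  assumes x: "0 < x" "x < 1" and N: "2 \<le> N"
  defines "s \<equiv> rank (enum (N - 2))"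
  assumes s: "1 \<le> s"
  shows "2 powr (real s / 2 - 1) / (4 * (real s + 2)\<^sup>2) \<le> (\<Sum>k=1..N. (pospart (basis k) x)\<^sup>2)"
proof -
  define M where "M = (s - 1) div 2"
  define j where "j = nat \<lfloor>x * 2 ^ M\<rfloor>"
  have jx: "real j \<le> x * 2 ^ M" "x * 2 ^ M < real j + 1" using x by (simp_all add: j_def)
  have "x * 2 ^ M < 2 ^ M" using x by simp
  with jx(1) have "real j < 2 ^ M" by linarith
  then have jM: "j < 2 ^ M" by (metis of_nat_less_iff of_nat_numeral of_nat_power)
  have xJ: "x \<in> dyadic_ivl M j" using jx by (auto simp: dyadic_ivl_def field_simps)
  obtain q where q: "node_at q = Full M j" using node_at_Full_ex[OF jM] by blast
  have "rank q = 2 * M" using q node_at_length[of q M j] by (simp add: rank_def)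
  obtain k0 where k0: "enum k0 = q" using bij_enum by (metis bij_pointE)
  have "k0 \<le> N - 2"
  proof (rule ccontr)
    assume "\<not> k0 \<le> N - 2"
    then have "s \<le> rank (enum k0)" using incseqD[OF incseq_rank_enum] by (simp add: s_def)
    then show False using \<open>rank q = 2 * M\<close> k0 s by (simp add: M_def)
  qed
  have "2 ^ M / (4 * ((real M + 1) * (real M + 2))) \<le> (pospart (basis (k0 + 2)) x)\<^sup>2"
    using haar_Full_sq_ge[OF q x xJ] haar_Full_nonneg[OF q x] k0
    by (simp add: basis_def pospart_def)
  also have "\<dots> \<le> (\<Sum>k=1..N. (pospart (basis k) x)\<^sup>2)"
    using \<open>k0 \<le> N - 2\<close> N by (intro member_le_sum) auto
  finally have pos: "2 ^ M / (4 * ((real M + 1) * (real M + 2))) \<le> (\<Sum>k=1..N. (pospart (basis k) x)\<^sup>2)" .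
  have "real s / 2 - 1 \<le> real M" using s by (simp add: M_def)
  then have num: "2 powr (real s / 2 - 1) \<le> 2 ^ M"
    by (simp add: powr_realpow[symmetric] powr_mono)
  have "M \<le> s" unfolding M_def using div_le_dividend[of "s - 1" 2] by linarith
  then have den: "4 * ((real M + 1) * (real M + 2)) \<le> 4 * (real s + 2)\<^sup>2"
    unfolding power2_eq_square by (intro mult_left_mono mult_mono) auto
  have "2 powr (real s / 2 - 1) / (4 * (real s + 2)\<^sup>2) \<le> 2 ^ M / (4 * ((real M + 1) * (real M + 2)))"
    by (rule frac_le[OF _ num _ den]) auto
  with pos show ?thesis by linarith
qed

lemma sum_negpart_basis_small:
  assumes x: "0 < x" "x < 1"
  shows "(\<lambda>N. \<Sum>k=1..N. (negpart (basis k) x)\<^sup>2) \<in> o(\<lambda>N. \<Sum>k=1..N. (pospart (basis k) x)\<^sup>2)"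
proof -
  define s where "s N = rank (enum (N - 2))" for N
  have s: "filterlim s at_top sequentially"
    unfolding s_def by (rule filterlim_compose[OF filterlim_rank_enum filterlim_minus_const_nat_at_top])
  have "(\<lambda>t::nat. (real t + 1) * 2 powr (real t / 8)) \<in> o(\<lambda>t. 2 powr (real t / 2 - 1) / (4 * (real t + 2)\<^sup>2))"
    by real_asymp
  from landau_o.small.compose[OF this s]
  have small: "(\<lambda>N. (real (s N) + 1) * 2 powr (real (s N) / 8))
      \<in> o(\<lambda>N. 2 powr (real (s N) / 2 - 1) / (4 * (real (s N) + 2)\<^sup>2))" .
  have "eventually (\<lambda>N. 1 \<le> s N) sequentially" using s by (simp add: filterlim_at_top)
  with eventually_ge_at_top[of 2] have ev: "eventually (\<lambda>N. 2 \<le> N \<and> 1 \<le> s N) sequentially"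
    by eventually_elim simp
  have neg: "(\<lambda>N. \<Sum>k=1..N. (negpart (basis k) x)\<^sup>2) \<in> O(\<lambda>N. (real (s N) + 1) * 2 powr (real (s N) / 8))"
  proof (intro landau_o.big_mono eventually_mono[OF ev])
    fix N :: nat assume "2 \<le> N \<and> 1 \<le> s N"
    then have "(\<Sum>k=1..N. (negpart (basis k) x)\<^sup>2) \<le> (real (s N) + 1) * 2 powr (real (s N) / 8)"
      unfolding s_def by (intro sum_negpart_basis_le[OF x]) simp
    moreover have "0 \<le> (\<Sum>k=1..N. (negpart (basis k) x)\<^sup>2)" by (intro sum_nonneg) simp
    ultimately show "norm (\<Sum>k=1..N. (negpart (basis k) x)\<^sup>2) \<le> norm ((real (s N) + 1) * 2 powr (real (s N) / 8))"
      by simp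
  qed
  have pos: "(\<lambda>N. 2 powr (real (s N) / 2 - 1) / (4 * (real (s N) + 2)\<^sup>2)) \<in> O(\<lambda>N. \<Sum>k=1..N. (pospart (basis k) x)\<^sup>2)"
  proof (intro landau_o.big_mono eventually_mono[OF ev])
    fix N :: nat assume "2 \<le> N \<and> 1 \<le> s N"
    then have "2 powr (real (s N) / 2 - 1) / (4 * (real (s N) + 2)\<^sup>2) \<le> (\<Sum>k=1..N. (pospart (basis k) x)\<^sup>2)"
      unfolding s_def by (intro sum_pospart_basis_ge[OF x]) simp_all
    then show "norm (2 powr (real (s N) / 2 - 1) / (4 * (real (s N) + 2)\<^sup>2)) \<le> norm (\<Sum>k=1..N. (pospart (basis k) x)\<^sup>2)"
      by simp
  qed
  show ?thesis
    by (rule landau_o.big_small_trans[OF neg landau_o.small_big_trans[OF small pos]])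
qed

theorem mainTheorem9:
  shows "\<exists>U :: nat \<Rightarrow> real \<Rightarrow> real. ONB02 U \<and>
     (\<forall>x\<in>{0<..<1}.
        (\<lambda>n. \<Sum>k=1..n. (negpart (U k) x)\<^sup>2) \<in> o(\<lambda>n. \<Sum>k=1..n. (pospart (U k) x)\<^sup>2))"
  using ONB02_basis sum_negpart_basis_small by auto

end
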